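(* Let $(x^k)$ be generated by the variational-equilibrium augmented Lagrangian method described below, where each step satisfies the inexactness assumption described below, let $\bar x$ be a limit point of $(x^k)$, and assume that $h$ satisfies (classical) CPLD in $\bar x$. Then $\bar x$ is a global solution of $$\min_{x\in\mathbb{R}^n}\ \|g_+(x)\|^2\quad\text{s.t.}\quad h(x)\le0.$$ In particular, if there are feasible points (points $x$ with $g(x)\le 0$ and $h(x)\le0$), then $\bar x$ is feasible.
   Context: GNEP with shared constraints: $N$ players, $x=(x^1,\ldots,x^N)\in\mathbb{R}^n$, $x^\nu\in\mathbb{R}^{n_\nu}$; player $\nu$ solves $\min_{x^\nu}\theta_\nu(x)$ s.t. $g(x)\le0$, $h(x)\le0$, where $\theta_\nu:\mathbb{R}^n\to\mathbb{R}$, $g:\mathbb{R}^n\to\mathbb{R}^m$, $h:\mathbb{R}^n\to\mathbb{R}^p$ are continuously differentiable and all components of $g$ and $h$ are convex. Notation: $v_+=\max\{0,v\}$ componentwise; $\nabla f$ = transposed Jacobian, $\nabla_{x^\nu}f$ its rows for $x^\nu$; $\min$ componentwise; Euclidean norms. Augmented Lagrangian of player $\nu$: $L_a^\nu(x,u;\rho)=\theta_\nu(x)+\frac{\rho}{2}\|(g(x)+u/\rho)_+\|^2$. Method: choose $u^{\max}\ge0$, $\tau\in(0,1)$, $\gamma>1$, $\rho_0>0$, $x^0\in\mathbb{R}^n$, $\lambda^0\in\mathbb{R}^m$, $\mu^0\in\mathbb{R}^p$, $u^0\in[0,u^{\max}]^m$. For $k=0,1,2,\dots$ (assumed to run forever):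 (1) compute $(x^{k+1},\mu^{k+1})\in\mathbb{R}^{n+p}$ satisfying the inexactness assumption; (2) $\lambda^{k+1}=(u^k+\rho_kg(x^{k+1}))_+$; (3) if $\|\min\{-g(x^{k+1}),\lambda^{k+1}\}\|\le\tau\|\min\{-g(x^k),\lambda^k\}\|$ set $\rho_{k+1}=\rho_k$, else $\rho_{k+1}=\gamma\rho_k$; (4) $u^{k+1}=\min\{\lambda^{k+1},u^{\max}\}$ componentwise. Inexactness assumption: for all $k$ and every $\nu$, $\|\nabla_{x^\nu}L_a^\nu(x^{k+1},u^k;\rho_k)+\nabla_{x^\nu}h(x^{k+1})\mu^{k+1}\|\le\varepsilon_k$ and $\|\min\{-h(x^{k+1}),\mu^{k+1}\}\|\le\varepsilon'_k$, with $(\varepsilon_k)\subset[0,\infty)$ bounded and $(\varepsilon'_k)\subset[0,\infty)$, $\varepsilon'_k\to0$. Classical CPLD for $h$ at $x$ with $h(x)\le0$: whenever $\nabla h_j(x)$, $j\in J$, are positively linearly dependent (a nontrivial nonnegative combination vanishes) for some $J\subset\{j:h_j(x)=0\}$, the gradients $\nabla h_j(y)$, $j\in J$, are linearly dependent for all $y$ in a neighbourhood of $x$. *)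

theory Defs
  imports "HOL-Analysis.Analysis"
begin

definition vplus :: "real^'m \<Rightarrow> real^'m" where
  "vplus v = (\<chi> j. max 0 (v $ j))"

definition vmin :: "real^'m \<Rightarrow> real^'m \<Rightarrow> real^'m" where
  "vmin a b = (\<chi> j. min (a $ j) (b $ j))"

text \<open>Gradient of a real-valued function on R^n (the Frechet derivative applied to
  the unit vectors), and the partial gradient with respect to the variables of
  block nu (coordinates i with blk i = nu), padded with zeros; its Euclidean norm
  equals the norm of the partial gradient in R^(n_nu).\<close>
definition grad :: "(real^'n \<Rightarrow> real) \<Rightarrow> real^'n \<Rightarrow> real^'n" where
  "grad f x = (\<chi> i. frechet_derivative f (at x) (axis i 1))"

definition bgrad :: "('n \<Rightarrow> 'N) \<Rightarrow> 'N \<Rightarrow> (real^'n \<Rightarrow> real) \<Rightarrow> real^'n \<Rightarrow> real^'n" where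
  "bgrad blk nu f x = (\<chi> i. if blk i = nu then grad f x $ i else 0)"

definition C1 :: "(real^'n \<Rightarrow> real) \<Rightarrow> bool" where
  "C1 f \<longleftrightarrow> (\<forall>x. f differentiable (at x)) \<and> continuous_on UNIV (grad f)"

definition La :: "(real^'n \<Rightarrow> real) \<Rightarrow> (real^'n \<Rightarrow> real^'m) \<Rightarrow> real^'n \<Rightarrow> real^'m \<Rightarrow> real \<Rightarrow> real" where
  "La th g x u rho = th x + rho / 2 * (norm (vplus (g x + (1 / rho) *\<^sub>R u)))\<^sup>2"

text \<open>Classical CPLD for h at x (x assumed feasible separately).\<close>
definition CPLD :: "(real^'n \<Rightarrow> real^'p) \<Rightarrow> real^'n \<Rightarrow> bool" where
  "CPLD h x \<longleftrightarrow>
    (\<forall>J. J \<subseteq> {j. h x $ j = 0} \<longrightarrow>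
      (\<exists>c. (\<forall>j\<in>J. c j \<ge> 0) \<and> (\<exists>j\<in>J. c j \<noteq> 0) \<and>
           (\<Sum>j\<in>J. c j *\<^sub>R grad (\<lambda>y. h y $ j) x) = 0) \<longrightarrow>
      (\<exists>e>0. \<forall>y\<in>ball x e. \<exists>c. (\<exists>j\<in>J. c j \<noteq> 0) \<and>
           (\<Sum>j\<in>J. c j *\<^sub>R grad (\<lambda>y. h y $ j) y) = 0))"

end

theory Submission
  imports Defs
begin

text \<open>
  Along a subsequence \<open>x\<^sup>k\<^sup>+\<^sup>1 \<rightarrow> xbar\<close>. The complementarity residuals \<open>min{-h(x\<^sup>k), \<mu>\<^sup>k}\<close>
  vanish, so \<open>h(xbar) \<le> 0\<close>. If the penalty parameter is eventually constant, the test in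
  step (3) makes \<open>min{-g(x\<^sup>k), \<lambda>\<^sup>k}\<close> decrease geometrically, hence \<open>g(xbar) \<le> 0\<close>.
  Otherwise \<open>\<rho>\<^sub>k \<rightarrow> \<infinity>\<close>: dividing the approximate stationarity conditions of all players
  by \<open>\<rho>\<^sub>k\<close> removes the objectives, and since \<open>\<lambda>\<^sup>k\<^sup>+\<^sup>1 / \<rho>\<^sub>k \<rightarrow> g\<^sub>+(xbar)\<close>, the vector
  \<open>-\<Sum> g\<^sub>j(xbar)\<^sub>+ \<nabla>g\<^sub>j(xbar)\<close> is a limit of nonnegative combinations of gradients of active
  constraints \<open>h\<^sub>j\<close>. A Caratheodory reduction to linearly independent subfamilies together
  with CPLD shows that such limits stay in the cone generated at \<open>xbar\<close>. The resulting KKT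
  conditions for \<open>min \<parallel>g\<^sub>+\<parallel>\<^sup>2 s.t. h \<le> 0\<close> are sufficient for global optimality because
  \<open>g\<close> and \<open>h\<close> are convex.
\<close>

section \<open>Convex and continuously differentiable functions\<close>

lemma convex_on_has_derivative_above_tangent:
  fixes f :: "'a::real_normed_vector \<Rightarrow> real"
  assumes convex: "convex_on UNIV f" and deriv: "(f has_derivative f') (at x)"
  shows "f' (y - x) \<le> f y - f x"
proof -
  define p where "p t = f (x + t *\<^sub>R (y - x))" for t :: real
  have "convex_on UNIV p"
  proof (rule convex_onI)
    fix t a b :: real assume "0 < t" "t < 1"
    have "x + ((1 - t) * a + t * b) *\<^sub>R (y - x)
        = (1 - t) *\<^sub>R (x + a *\<^sub>R (y - x)) + t *\<^sub>R (x + b *\<^sub>R (y - x))"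
      by (simp add: algebra_simps)
    then show "p ((1 - t) *\<^sub>R a + t *\<^sub>R b) \<le> (1 - t) * p a + t * p b"
      unfolding p_def using convex_onD[OF convex, of t] \<open>0 < t\<close> \<open>t < 1\<close> by simp
  qed simp
  moreover have "(p has_field_derivative f' (y - x)) (at 0)"
  proof -
    have line: "((\<lambda>t. x + t *\<^sub>R (y - x)) has_derivative (\<lambda>t. t *\<^sub>R (y - x))) (at 0)"
      by (auto intro!: derivative_eq_intros)
    have "(p has_derivative (\<lambda>t. f' (t *\<^sub>R (y - x)))) (at 0)"
      unfolding p_def using has_derivative_compose[OF line] deriv by simp
    moreover have "(\<lambda>t. f' (t *\<^sub>R (y - x))) = (*) (f' (y - x))"
      using linear_scale[OF has_derivative_linear[OF deriv]] by (simp add: fun_eq_iff)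
    ultimately show ?thesis by (simp add: has_field_derivative_def)
  qed
  ultimately have "p 1 - p 0 \<ge> f' (y - x) * (1 - 0)"
    by (intro convex_on_imp_above_tangent) auto
  then show ?thesis by (simp add: p_def)
qed

lemma grad_inner_has_derivative:
  fixes f :: "real^'n \<Rightarrow> real"
  assumes deriv: "(f has_derivative f') (at x)"
  shows "grad f x \<bullet> v = f' v"
proof -
  have "f' v = f' (\<Sum>i\<in>UNIV. v $ i *s axis i 1)"
    by (simp add: basis_expansion)
  also have "\<dots> = (\<Sum>i\<in>UNIV. v $ i * f' (axis i 1))"
    using has_derivative_linear[OF deriv] by (simp add: linear_sum linear_scale scalar_mult_eq_scaleR)
  finally show ?thesis
    unfolding grad_def inner_vec_def frechet_derivative_at[OF deriv, symmetric]
    by (simp add: mult.commute)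
qed

lemma grad_eqI:
  assumes "(f has_derivative (\<lambda>v. G \<bullet> v)) (at x)"
  shows "grad f x = G"
  using grad_inner_has_derivative[OF assms, of "axis _ 1"] by (simp add: vec_eq_iff inner_axis)

lemma C1_has_derivative_grad: "C1 f \<Longrightarrow> (f has_derivative (\<lambda>v. grad f x \<bullet> v)) (at x)"
  unfolding C1_def
  using frechet_derivative_works grad_inner_has_derivative by (metis (no_types, lifting) ext)

lemma C1_isCont: "C1 f \<Longrightarrow> isCont f x"
  by (simp add: C1_def differentiable_imp_continuous_within)

lemma C1_isCont_grad: "C1 f \<Longrightarrow> isCont (grad f) x"
  by (simp add: C1_def continuous_on_eq_continuous_at)

lemma convex_C1_grad_above_tangent:
  assumes "C1 f" "convex_on UNIV f"
  shows "grad f x \<bullet> (y - x) \<le> f y - f x"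
  using convex_on_has_derivative_above_tangent[OF assms(2) C1_has_derivative_grad[OF assms(1)]] .

lemma pos_part_square_above_tangent:
  fixes s t :: real
  shows "(max 0 t)\<^sup>2 + 2 * max 0 t * (s - t) \<le> (max 0 s)\<^sup>2"
proof (cases "t \<ge> 0")
  case True
  have "0 \<le> (max 0 s - t)\<^sup>2" by simp
  moreover have "t * s \<le> t * max 0 s" using True by (simp add: mult_left_mono)
  ultimately show ?thesis using True by (simp add: power2_eq_square algebra_simps)
qed simp

lemma pos_part_diff_mult_le:
  fixes t h :: real
  shows "(max 0 (t + h) - max 0 t) * h \<le> h\<^sup>2"
proof (cases "h \<ge> 0")
  case True
  then have "max 0 (t + h) - max 0 t \<le> h" by linarith
  with True show ?thesis by (simp add: power2_eq_square mult_right_mono)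
next
  case False
  then have "h \<le> max 0 (t + h) - max 0 t" by linarith
  with False show ?thesis by (simp add: power2_eq_square mult_right_mono_neg)
qed

lemma pos_part_square_remainder:
  fixes t h :: real
  shows "\<bar>(max 0 (t + h))\<^sup>2 - (max 0 t)\<^sup>2 - 2 * max 0 t * h\<bar> \<le> 2 * h\<^sup>2"
  \<comment> \<open>the two bounds are the tangent inequalities at \<open>t\<close> and at \<open>t + h\<close>\<close>
  using pos_part_square_above_tangent[of t "t + h"] pos_part_square_above_tangent[of "t + h" t]
    pos_part_diff_mult_le[of t h]
  by (simp add: abs_le_iff algebra_simps)

lemma has_real_derivative_pos_part_square:
  "((\<lambda>s::real. (max 0 s)\<^sup>2) has_real_derivative 2 * max 0 t) (at t)"
proof -
  let ?q = "\<lambda>h. ((max 0 (t + h))\<^sup>2 - (max 0 t)\<^sup>2) / h"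
  have "norm (?q h - 2 * max 0 t) \<le> 2 * \<bar>h\<bar>" if "h \<noteq> 0" for h
  proof -
    have "\<bar>?q h - 2 * max 0 t\<bar> = \<bar>(max 0 (t + h))\<^sup>2 - (max 0 t)\<^sup>2 - 2 * max 0 t * h\<bar> / \<bar>h\<bar>"
      using that by (simp add: diff_divide_distrib abs_divide[symmetric])
    also have "\<dots> \<le> 2 * h\<^sup>2 / \<bar>h\<bar>"
      by (intro divide_right_mono pos_part_square_remainder) simp
    also have "\<dots> = 2 * \<bar>h\<bar>"
      using that by (metis abs_mult_self_eq nonzero_mult_div_cancel_left power2_eq_square
          abs_eq_0 times_divide_eq_right)
    finally show ?thesis by simp
  qed
  then have "\<forall>\<^sub>F h in at 0. norm (?q h - 2 * max 0 t) \<le> 2 * \<bar>h\<bar>"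
    by (auto simp: eventually_at_filter)
  moreover have "((\<lambda>h::real. 2 * \<bar>h\<bar>) \<longlongrightarrow> 0) (at 0)"
    by (auto intro!: tendsto_eq_intros)
  ultimately have "((\<lambda>h. ?q h - 2 * max 0 t) \<longlongrightarrow> 0) (at 0)"
    by (rule Lim_null_comparison)
  then show ?thesis
    unfolding DERIV_def by (rule LIM_zero_cancel)
qed

lemma norm_vplus_square: "(norm (vplus v))\<^sup>2 = (\<Sum>j\<in>UNIV. (max 0 (v $ j))\<^sup>2)"
  unfolding dot_square_norm[symmetric] inner_vec_def vplus_def by (simp add: power2_eq_square)

lemma grad_La:
  fixes th :: "real^'n \<Rightarrow> real" and g :: "real^'n \<Rightarrow> real^'m"
  assumes th: "C1 th" and g: "\<And>j. C1 (\<lambda>y. g y $ j)" and rho: "\<rho> > 0"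
  shows "grad (\<lambda>y. La th g y u \<rho>) x
       = grad th x + (\<Sum>j\<in>UNIV. max 0 (u $ j + \<rho> * g x $ j) *\<^sub>R grad (\<lambda>y. g y $ j) x)"
proof (rule grad_eqI)
  let ?m = "\<lambda>j. max 0 (g x $ j + u $ j / \<rho>)"
  have La_eq: "(\<lambda>y. La th g y u \<rho>)
      = (\<lambda>y. th y + \<rho> / 2 * (\<Sum>j\<in>UNIV. (max 0 (g y $ j + u $ j / \<rho>))\<^sup>2))"
    by (simp add: La_def norm_vplus_square fun_eq_iff)
  have "((\<lambda>y. (max 0 (g y $ j + u $ j / \<rho>))\<^sup>2) has_derivative
      (\<lambda>v. (grad (\<lambda>y. g y $ j) x \<bullet> v) * (2 * ?m j))) (at x)" for j
    using DERIV_compose_FDERIV[OF has_real_derivative_pos_part_square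
        has_derivative_add_const[OF C1_has_derivative_grad[OF g]]] .
  then have "((\<lambda>y. La th g y u \<rho>) has_derivative
      (\<lambda>v. grad th x \<bullet> v + \<rho> / 2 * (\<Sum>j\<in>UNIV. (grad (\<lambda>y. g y $ j) x \<bullet> v) * (2 * ?m j)))) (at x)"
    unfolding La_eq
    by (intro has_derivative_add C1_has_derivative_grad[OF th] has_derivative_mult_right
        has_derivative_sum)
  moreover have "\<rho> * (c * ?m j) = c * max 0 (u $ j + \<rho> * g x $ j)" for c j
  proof -
    have "\<rho> * ?m j = max 0 (u $ j + \<rho> * g x $ j)"
      using rho by (simp add: max_mult_distrib_left distrib_left)
    then show ?thesis by (metis mult.left_commute)
  qed
  ultimately show "((\<lambda>y. La th g y u \<rho>) has_derivative (\<lambda>v.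
      (grad th x + (\<Sum>j\<in>UNIV. max 0 (u $ j + \<rho> * g x $ j) *\<^sub>R grad (\<lambda>y. g y $ j) x)) \<bullet> v)) (at x)"
    by (simp add: inner_add_left inner_sum_left sum_distrib_left algebra_simps)
qed

section \<open>Positive linear dependence and CPLD\<close>

definition linearly_independent_on :: "'i set \<Rightarrow> ('i \<Rightarrow> 'a::real_vector) \<Rightarrow> bool" where
  "linearly_independent_on J v \<longleftrightarrow> (\<forall>d. (\<Sum>j\<in>J. d j *\<^sub>R v j) = 0 \<longrightarrow> (\<forall>j\<in>J. d j = 0))"

definition positively_dependent_on :: "'i set \<Rightarrow> ('i \<Rightarrow> 'a::real_vector) \<Rightarrow> bool" where
  "positively_dependent_on J v \<longleftrightarrow>
    (\<exists>c. (\<forall>j\<in>J. c j \<ge> 0) \<and> (\<exists>j\<in>J. c j \<noteq> 0) \<and> (\<Sum>j\<in>J. c j *\<^sub>R v j) = 0)"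

definition CPLD_family :: "'i set \<Rightarrow> ('i \<Rightarrow> 'b::metric_space \<Rightarrow> 'a::real_vector) \<Rightarrow> 'b \<Rightarrow> bool" where
  "CPLD_family A a x \<longleftrightarrow> (\<forall>J\<subseteq>A. positively_dependent_on J (\<lambda>j. a j x) \<longrightarrow>
     (\<exists>e>0. \<forall>y\<in>ball x e. \<not> linearly_independent_on J (\<lambda>j. a j y)))"

lemma CPLD_iff_CPLD_family:
  "CPLD h x \<longleftrightarrow> CPLD_family {j. h x $ j = 0} (\<lambda>j. grad (\<lambda>y. h y $ j)) x"
  unfolding CPLD_def CPLD_family_def positively_dependent_on_def linearly_independent_on_def
  by (simp add: conj_commute)

lemma not_linearly_independent_onE:
  assumes "\<not> linearly_independent_on J v"
  obtains d j1 where "(\<Sum>j\<in>J. d j *\<^sub>R v j) = 0" "j1 \<in> J" "d j1 > 0"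
proof -
  obtain d j1 where "(\<Sum>j\<in>J. d j *\<^sub>R v j) = 0" "j1 \<in> J" "d j1 \<noteq> 0"
    using assms unfolding linearly_independent_on_def by blast
  then show thesis
    using that[of d j1] that[of "\<lambda>j. - d j" j1] by (cases "d j1 > 0") (auto simp: sum_negf)
qed

lemma conic_combination_drop_index:
  fixes v :: "'i \<Rightarrow> 'a::real_vector"
  assumes J: "finite J" and c: "\<forall>j\<in>J. c j \<ge> 0" and dep: "\<not> linearly_independent_on J v"
  obtains j0 c' where "j0 \<in> J" "\<forall>j\<in>J - {j0}. c' j \<ge> 0"
    "(\<Sum>j\<in>J - {j0}. c' j *\<^sub>R v j) = (\<Sum>j\<in>J. c j *\<^sub>R v j)"
proof -
  obtain d j1 where d: "(\<Sum>j\<in>J. d j *\<^sub>R v j) = 0" "j1 \<in> J" "d j1 > 0"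
    using not_linearly_independent_onE[OF dep] by blast
  define P where "P = {j\<in>J. d j > 0}"
  have P: "finite P" "P \<noteq> {}" using J d by (auto simp: P_def)
  \<comment> \<open>the largest step along \<open>-d\<close> that keeps all coefficients nonnegative\<close>
  define t where "t = Min ((\<lambda>j. c j / d j) ` P)"
  have "t \<in> (\<lambda>j. c j / d j) ` P" unfolding t_def using P by (intro Min_in) auto
  then obtain j0 where j0: "j0 \<in> P" "t = c j0 / d j0" by blast
  have t_le: "t \<le> c j / d j" if "j \<in> P" for j
    unfolding t_def using P that by auto
  have t_nonneg: "t \<ge> 0" using j0 c by (auto simp: P_def)
  define c' where "c' j = c j - t * d j" for j
  show thesis
  proof
    show "j0 \<in> J" using j0 by (simp add: P_def)
    show "\<forall>j\<in>J - {j0}. c' j \<ge> 0"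
    proof
      fix j assume j: "j \<in> J - {j0}"
      show "c' j \<ge> 0"
      proof (cases "d j > 0")
        case True
        then have "t * d j \<le> c j" using t_le[of j] j by (simp add: P_def pos_le_divide_eq)
        then show ?thesis by (simp add: c'_def)
      next
        case False
        then have "t * d j \<le> 0" using t_nonneg by (simp add: mult_nonneg_nonpos)
        moreover have "c j \<ge> 0" using c j by blast
        ultimately show ?thesis by (simp add: c'_def)
      qed
    qed
    have "c' j0 = 0" using j0 by (simp add: c'_def P_def)
    then have "(\<Sum>j\<in>J - {j0}. c' j *\<^sub>R v j) = (\<Sum>j\<in>J. c' j *\<^sub>R v j)"
      using sum.remove[OF J, of j0 "\<lambda>j. c' j *\<^sub>R v j"] j0 by (simp add: P_def)
    also have "\<dots> = (\<Sum>j\<in>J. c j *\<^sub>R v j) - t *\<^sub>R (\<Sum>j\<in>J. d j *\<^sub>R v j)"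
      by (simp add: c'_def scaleR_diff_left sum_subtractf scaleR_sum_right)
    finally show "(\<Sum>j\<in>J - {j0}. c' j *\<^sub>R v j) = (\<Sum>j\<in>J. c j *\<^sub>R v j)"
      using d by simp
  qed
qed

lemma conic_caratheodory:
  fixes v :: "'i \<Rightarrow> 'a::real_vector"
  assumes "finite J" "\<forall>j\<in>J. c j \<ge> 0"
  shows "\<exists>J'\<subseteq>J. \<exists>c'. (\<forall>j\<in>J'. c' j \<ge> 0) \<and>
           (\<Sum>j\<in>J'. c' j *\<^sub>R v j) = (\<Sum>j\<in>J. c j *\<^sub>R v j) \<and> linearly_independent_on J' v"
  using assms
proof (induction J arbitrary: c rule: finite_psubset_induct)
  case (psubset J)
  show ?case
  proof (cases "linearly_independent_on J v")
    case True
    with psubset.prems show ?thesis by (intro exI[of _ J] conjI exI[of _ c]) auto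
  next
    case False
    then obtain j0 c' where j0: "j0 \<in> J" and c': "\<forall>j\<in>J - {j0}. c' j \<ge> 0"
      and sum_eq: "(\<Sum>j\<in>J - {j0}. c' j *\<^sub>R v j) = (\<Sum>j\<in>J. c j *\<^sub>R v j)"
      using conic_combination_drop_index[OF psubset.hyps(1) psubset.prems] by blast
    from j0 have "J - {j0} \<subset> J" by blast
    from psubset.IH[OF this c'] obtain J' c'' where "J' \<subseteq> J - {j0}" "\<forall>j\<in>J'. c'' j \<ge> 0"
      "(\<Sum>j\<in>J'. c'' j *\<^sub>R v j) = (\<Sum>j\<in>J - {j0}. c' j *\<^sub>R v j)" "linearly_independent_on J' v"
      by blast
    with sum_eq show ?thesis by (intro exI[of _ J'] conjI exI[of _ c'']) auto
  qed
qed

lemma conic_caratheodory_seq: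
  fixes v :: "nat \<Rightarrow> 'i \<Rightarrow> 'a::real_vector"
  assumes A: "finite A" and c: "\<And>k j. j \<in> A \<Longrightarrow> c k j \<ge> 0"
  obtains J C where "\<And>k. J k \<subseteq> A" "\<And>k j. j \<in> J k \<Longrightarrow> C k j \<ge> 0"
    "\<And>k. (\<Sum>j\<in>J k. C k j *\<^sub>R v k j) = (\<Sum>j\<in>A. c k j *\<^sub>R v k j)"
    "\<And>k. linearly_independent_on (J k) (v k)"
proof -
  have "\<forall>k. \<exists>J. J \<subseteq> A \<and> (\<exists>C. (\<forall>j\<in>J. C j \<ge> 0) \<and>
      (\<Sum>j\<in>J. C j *\<^sub>R v k j) = (\<Sum>j\<in>A. c k j *\<^sub>R v k j) \<and> linearly_independent_on J (v k))"
    using conic_caratheodory[OF A, of "c _" "v _"] c by blast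
  then obtain J where "\<forall>k. J k \<subseteq> A \<and> (\<exists>C. (\<forall>j\<in>J k. C j \<ge> 0) \<and>
      (\<Sum>j\<in>J k. C j *\<^sub>R v k j) = (\<Sum>j\<in>A. c k j *\<^sub>R v k j) \<and> linearly_independent_on (J k) (v k))"
    by (auto dest: choice)
  then have JA: "\<And>k. J k \<subseteq> A" and ex_C: "\<forall>k. \<exists>C. (\<forall>j\<in>J k. C j \<ge> 0) \<and>
      (\<Sum>j\<in>J k. C j *\<^sub>R v k j) = (\<Sum>j\<in>A. c k j *\<^sub>R v k j) \<and> linearly_independent_on (J k) (v k)"
    by blast+
  from choice[OF ex_C] obtain C where "\<forall>k. (\<forall>j\<in>J k. C k j \<ge> 0) \<and>
      (\<Sum>j\<in>J k. C k j *\<^sub>R v k j) = (\<Sum>j\<in>A. c k j *\<^sub>R v k j) \<and> linearly_independent_on (J k) (v k)"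
    by blast
  with JA show thesis by (intro that[of J C]) blast+
qed

lemma CPLD_family_limit_not_positively_dependent:
  assumes "CPLD_family A a x" "J \<subseteq> A" "y \<longlonglongrightarrow> x"
    and "\<And>n. linearly_independent_on J (\<lambda>j. a j (y n))"
  shows "\<not> positively_dependent_on J (\<lambda>j. a j x)"
proof
  assume "positively_dependent_on J (\<lambda>j. a j x)"
  then obtain e where "e > 0" and e: "\<forall>z\<in>ball x e. \<not> linearly_independent_on J (\<lambda>j. a j z)"
    using assms(1,2) unfolding CPLD_family_def by blast
  from \<open>y \<longlonglongrightarrow> x\<close> \<open>e > 0\<close> obtain n where "dist (y n) x < e"
    by (meson LIMSEQ_iff_nz dist_commute order_refl)
  then show False using e assms(4)[of n] by (simp add: dist_commute)
qed

lemma nonneg_combination_limit_normalized: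
  fixes a :: "'i::finite \<Rightarrow> 'b::metric_space \<Rightarrow> 'a::real_normed_vector"
  assumes cont: "\<And>j. isCont (a j) x" and y: "y \<longlonglongrightarrow> x"
    and C: "\<And>n j. j \<in> J \<Longrightarrow> C n j \<ge> 0"
    and lim: "(\<lambda>n. \<Sum>j\<in>J. C n j *\<^sub>R a j (y n)) \<longlonglongrightarrow> z"
  obtains dd :: "real^'i" and tt where "\<forall>j\<in>J. dd $ j \<ge> 0" "\<forall>j. j \<notin> J \<longrightarrow> dd $ j = 0"
    "tt \<ge> 0" "norm dd + tt = 1" "(\<Sum>j\<in>J. dd $ j *\<^sub>R a j x) = tt *\<^sub>R z"
proof -
  \<comment> \<open>normalise the coefficients to \<open>(D, T)\<close> with \<open>norm D + T = 1\<close> and pass to a limit \<open>(dd, tt)\<close>\<close>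
  define Cv where "Cv n = (\<chi> j. if j \<in> J then C n j else 0)" for n
  define T where "T n = 1 / (1 + norm (Cv n))" for n
  define D where "D n = T n *\<^sub>R Cv n" for n
  have T_pos: "T n > 0" for n
    unfolding T_def by (simp add: add_pos_nonneg)
  have T_eq: "T n = 1 - norm (D n)" for n
  proof -
    have "1 + norm (Cv n) > 0" by (simp add: add_pos_nonneg)
    then show ?thesis using T_pos[of n] by (simp add: D_def T_def field_simps)
  qed
  have "bounded (range D)"
    unfolding bounded_iff using T_eq T_pos by (metis less_eq_real_def rangeE diff_gt_0_iff_gt)
  then obtain r dd where r: "strict_mono r" and D_lim: "(D \<circ> r) \<longlonglongrightarrow> dd"
    using bounded_imp_convergent_subsequence by blast
  define tt where "tt = 1 - norm dd"
  have T_lim: "(T \<circ> r) \<longlonglongrightarrow> tt"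
    unfolding tt_def o_def T_eq using D_lim by (auto simp: o_def intro!: tendsto_intros)
  have y_lim: "(y \<circ> r) \<longlonglongrightarrow> x"
    using LIMSEQ_subseq_LIMSEQ[OF y r] .
  have "(\<lambda>n. \<Sum>j\<in>J. D (r n) $ j *\<^sub>R a j (y (r n))) \<longlonglongrightarrow> (\<Sum>j\<in>J. dd $ j *\<^sub>R a j x)"
    using D_lim y_lim
    by (auto simp: o_def intro!: tendsto_intros tendsto_vec_nth isCont_tendsto_compose[OF cont])
  moreover have "(\<Sum>j\<in>J. D n $ j *\<^sub>R a j (y n)) = T n *\<^sub>R (\<Sum>j\<in>J. C n j *\<^sub>R a j (y n))" for n
    by (simp add: D_def Cv_def scaleR_sum_right)
  moreover have "(\<lambda>n. T (r n) *\<^sub>R (\<Sum>j\<in>J. C (r n) j *\<^sub>R a j (y (r n)))) \<longlonglongrightarrow> tt *\<^sub>R z"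
    using T_lim LIMSEQ_subseq_LIMSEQ[OF lim r] by (auto simp: o_def intro: tendsto_scaleR)
  ultimately have "(\<Sum>j\<in>J. dd $ j *\<^sub>R a j x) = tt *\<^sub>R z"
    using LIMSEQ_unique by auto
  moreover have "dd $ j \<ge> 0" if "j \<in> J" for j
    using D_lim T_pos C[OF that]
    by (intro LIMSEQ_le_const[OF tendsto_vec_nth]) (auto simp: o_def D_def Cv_def less_imp_le)
  moreover have "dd $ j = 0" if "j \<notin> J" for j
    using tendsto_vec_nth[OF D_lim, of j] that by (simp add: o_def D_def Cv_def LIMSEQ_const_iff)
  moreover have "tt \<ge> 0"
    using T_lim T_pos by (intro LIMSEQ_le_const) (auto simp: less_imp_le)
  ultimately show thesis
    using that[of dd tt] by (simp add: tt_def)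
qed

lemma CPLD_family_cone_limit_fixed_support:
  fixes a :: "'i::finite \<Rightarrow> 'b::metric_space \<Rightarrow> 'a::real_normed_vector"
  assumes cpld: "CPLD_family A a x" and J: "J \<subseteq> A"
    and cont: "\<And>j. isCont (a j) x" and y: "y \<longlonglongrightarrow> x"
    and indep: "\<And>n. linearly_independent_on J (\<lambda>j. a j (y n))"
    and C: "\<And>n j. j \<in> J \<Longrightarrow> C n j \<ge> 0"
    and lim: "(\<lambda>n. \<Sum>j\<in>J. C n j *\<^sub>R a j (y n)) \<longlonglongrightarrow> z"
  shows "\<exists>\<nu>. (\<forall>j\<in>J. \<nu> j \<ge> 0) \<and> (\<Sum>j\<in>J. \<nu> j *\<^sub>R a j x) = z"
proof -
  obtain dd :: "real^'i" and tt where dd_nonneg: "\<forall>j\<in>J. dd $ j \<ge> 0"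
    and dd_outside: "\<forall>j. j \<notin> J \<longrightarrow> dd $ j = 0" and "tt \<ge> 0" "norm dd + tt = 1"
    and limit_eq: "(\<Sum>j\<in>J. dd $ j *\<^sub>R a j x) = tt *\<^sub>R z"
    by (rule nonneg_combination_limit_normalized[OF cont y C lim])
  show ?thesis
  proof (cases "tt = 0")
    case True
    with \<open>norm dd + tt = 1\<close> have "dd \<noteq> 0" by auto
    then obtain j1 where "dd $ j1 \<noteq> 0" by (auto simp: vec_eq_iff)
    with dd_outside have "j1 \<in> J" by blast
    with \<open>dd $ j1 \<noteq> 0\<close> dd_nonneg limit_eq True
    have "positively_dependent_on J (\<lambda>j. a j x)"
      unfolding positively_dependent_on_def by (intro exI[of _ "\<lambda>j. dd $ j"]) auto
    moreover have "\<not> positively_dependent_on J (\<lambda>j. a j x)"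
      using CPLD_family_limit_not_positively_dependent[OF cpld J y indep] .
    ultimately show ?thesis by contradiction
  next
    case False
    with \<open>tt \<ge> 0\<close> have "tt > 0" by simp
    have "(\<Sum>j\<in>J. (dd $ j / tt) *\<^sub>R a j x) = (1 / tt) *\<^sub>R (\<Sum>j\<in>J. dd $ j *\<^sub>R a j x)"
      by (simp add: scaleR_sum_right)
    also have "\<dots> = z" using limit_eq \<open>tt > 0\<close> by simp
    finally show ?thesis
      using dd_nonneg \<open>tt > 0\<close> by (intro exI[of _ "\<lambda>j. dd $ j / tt"]) auto
  qed
qed

lemma CPLD_family_cone_limit:
  fixes a :: "'i::finite \<Rightarrow> 'b::metric_space \<Rightarrow> 'a::real_normed_vector"
  assumes cpld: "CPLD_family A a x" and cont: "\<And>j. isCont (a j) x" and y: "y \<longlonglongrightarrow> x"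
    and c: "\<And>k j. j \<in> A \<Longrightarrow> c k j \<ge> 0"
    and lim: "(\<lambda>k. \<Sum>j\<in>A. c k j *\<^sub>R a j (y k)) \<longlonglongrightarrow> z"
  shows "\<exists>\<nu>. (\<forall>j\<in>A. \<nu> j \<ge> 0) \<and> (\<Sum>j\<in>A. \<nu> j *\<^sub>R a j x) = z"
proof -
  obtain J C where JA: "\<And>k. J k \<subseteq> A" and C: "\<And>k j. j \<in> J k \<Longrightarrow> C k j \<ge> 0"
    and C_sum: "\<And>k. (\<Sum>j\<in>J k. C k j *\<^sub>R a j (y k)) = (\<Sum>j\<in>A. c k j *\<^sub>R a j (y k))"
    and indep: "\<And>k. linearly_independent_on (J k) (\<lambda>j. a j (y k))"
    using conic_caratheodory_seq[of A c "\<lambda>k j. a j (y k)"] c by auto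
  \<comment> \<open>only finitely many supports occur, so one of them occurs infinitely often\<close>
  have "finite (range J)"
    by (rule finite_subset[of _ "Pow UNIV"]) auto
  from pigeonhole_infinite[OF infinite_UNIV_nat this]
  obtain k0 where "infinite {k. J k = J k0}" by auto
  from infinite_enumerate[OF this] obtain r :: "nat \<Rightarrow> nat"
    where r: "strict_mono r" and r_J: "\<forall>n. r n \<in> {k. J k = J k0}" by blast
  define J0 where "J0 = J k0"
  have J_r: "J (r n) = J0" for n using r_J by (simp add: J0_def)
  have J0A: "J0 \<subseteq> A" using JA[of k0] by (simp add: J0_def)
  have "\<exists>\<nu>. (\<forall>j\<in>J0. \<nu> j \<ge> 0) \<and> (\<Sum>j\<in>J0. \<nu> j *\<^sub>R a j x) = z"
  proof (rule CPLD_family_cone_limit_fixed_support[OF cpld J0A cont])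
    show "(y \<circ> r) \<longlonglongrightarrow> x" using LIMSEQ_subseq_LIMSEQ[OF y r] .
    show "linearly_independent_on J0 (\<lambda>j. a j ((y \<circ> r) n))" for n
      using indep[of "r n"] J_r by simp
    show "C (r n) j \<ge> 0" if "j \<in> J0" for n j
      using C[of j "r n"] J_r that by simp
    have "(\<Sum>j\<in>J0. C (r n) j *\<^sub>R a j ((y \<circ> r) n)) = ((\<lambda>k. \<Sum>j\<in>A. c k j *\<^sub>R a j (y k)) \<circ> r) n" for n
      using C_sum[of "r n"] by (simp add: J_r)
    with LIMSEQ_subseq_LIMSEQ[OF lim r]
    show "(\<lambda>n. \<Sum>j\<in>J0. C (r n) j *\<^sub>R a j ((y \<circ> r) n)) \<longlonglongrightarrow> z" by (simp add: o_def)
  qed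
  then obtain \<nu> where \<nu>: "\<forall>j\<in>J0. \<nu> j \<ge> 0" "(\<Sum>j\<in>J0. \<nu> j *\<^sub>R a j x) = z" by blast
  from J0A have "(\<Sum>j\<in>A. (if j \<in> J0 then \<nu> j else 0) *\<^sub>R a j x) = (\<Sum>j\<in>J0. \<nu> j *\<^sub>R a j x)"
    by (intro sum.mono_neutral_cong_right) auto
  then show ?thesis
    using \<nu> by (intro exI[of _ "\<lambda>j. if j \<in> J0 then \<nu> j else 0"]) auto
qed

lemma CPLD_family_cone_limit_approx:
  fixes a :: "'i::finite \<Rightarrow> 'b::metric_space \<Rightarrow> 'a::real_normed_vector"
  assumes cpld: "CPLD_family A a x" and cont: "\<And>j. isCont (a j) x" and y: "y \<longlonglongrightarrow> x"
    and neg_part: "\<And>j. j \<in> A \<Longrightarrow> (\<lambda>k. min 0 (c k j)) \<longlonglongrightarrow> 0"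
    and outside: "\<And>j. j \<notin> A \<Longrightarrow> (\<lambda>k. c k j) \<longlonglongrightarrow> 0"
    and lim: "(\<lambda>k. \<Sum>j\<in>UNIV. c k j *\<^sub>R a j (y k)) \<longlonglongrightarrow> z"
  shows "\<exists>\<nu>. (\<forall>j\<in>A. \<nu> j \<ge> 0) \<and> (\<Sum>j\<in>A. \<nu> j *\<^sub>R a j x) = z"
proof (rule CPLD_family_cone_limit[OF cpld cont y])
  define e where "e k j = (if j \<in> A then min 0 (c k j) else c k j)" for k j
  have "(\<lambda>k. e k j) \<longlonglongrightarrow> 0" for j
    by (cases "j \<in> A") (simp_all add: e_def neg_part outside)
  then have "(\<lambda>k. \<Sum>j\<in>UNIV. e k j *\<^sub>R a j (y k)) \<longlonglongrightarrow> (\<Sum>j\<in>UNIV. 0 *\<^sub>R a j x)"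
    by (intro tendsto_sum tendsto_scaleR isCont_tendsto_compose[OF cont y])
  from tendsto_diff[OF lim this]
  have "(\<lambda>k. \<Sum>j\<in>UNIV. (c k j - e k j) *\<^sub>R a j (y k)) \<longlonglongrightarrow> z"
    by (simp add: sum_subtractf scaleR_diff_left)
  moreover have "(\<Sum>j\<in>UNIV. (c k j - e k j) *\<^sub>R a j (y k)) = (\<Sum>j\<in>A. max 0 (c k j) *\<^sub>R a j (y k))" for k
    by (rule sum.mono_neutral_cong_right) (auto simp: e_def)
  ultimately show "(\<lambda>k. \<Sum>j\<in>A. max 0 (c k j) *\<^sub>R a j (y k)) \<longlonglongrightarrow> z" by simp
qed simp

section \<open>Optimality for the squared infeasibility\<close>

definition KKT_sq_infeasibility :: "(real^'n \<Rightarrow> real^'m) \<Rightarrow> (real^'n \<Rightarrow> real^'p) \<Rightarrow> real^'n \<Rightarrow> bool" where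
  "KKT_sq_infeasibility g h x \<longleftrightarrow> (\<forall>j. h x $ j \<le> 0) \<and>
    (\<exists>\<nu>. (\<forall>j\<in>{j. h x $ j = 0}. \<nu> j \<ge> 0) \<and>
      (\<Sum>j\<in>UNIV. max 0 (g x $ j) *\<^sub>R grad (\<lambda>y. g y $ j) x)
      + (\<Sum>j\<in>{j. h x $ j = 0}. \<nu> j *\<^sub>R grad (\<lambda>y. h y $ j) x) = 0)"

lemma KKT_sq_infeasibility_imp_min:
  fixes g :: "real^'n \<Rightarrow> real^'m" and h :: "real^'n \<Rightarrow> real^'p"
  assumes g_C1: "\<And>j. C1 (\<lambda>y. g y $ j)" and h_C1: "\<And>j. C1 (\<lambda>y. h y $ j)"
    and g_convex: "\<And>j. convex_on UNIV (\<lambda>y. g y $ j)"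
    and h_convex: "\<And>j. convex_on UNIV (\<lambda>y. h y $ j)"
    and KKT: "KKT_sq_infeasibility g h x" and y: "\<forall>j. h y $ j \<le> 0"
  shows "(norm (vplus (g x)))\<^sup>2 \<le> (norm (vplus (g y)))\<^sup>2"
proof -
  let ?A = "{j. h x $ j = 0}"
  obtain \<nu> where \<nu>: "\<forall>j\<in>?A. \<nu> j \<ge> 0" and stat:
    "(\<Sum>j\<in>UNIV. max 0 (g x $ j) *\<^sub>R grad (\<lambda>y. g y $ j) x)
      + (\<Sum>j\<in>?A. \<nu> j *\<^sub>R grad (\<lambda>y. h y $ j) x) = 0"
    using KKT unfolding KKT_sq_infeasibility_def by blast
  have "(\<Sum>j\<in>?A. \<nu> j * (grad (\<lambda>y. h y $ j) x \<bullet> (y - x)))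
      \<le> (\<Sum>j\<in>?A. \<nu> j * (h y $ j - h x $ j))"
    using \<nu> by (intro sum_mono mult_left_mono convex_C1_grad_above_tangent[OF h_C1 h_convex]) auto
  also have "\<dots> \<le> 0" using y \<nu> by (intro sum_nonpos) (simp add: mult_nonneg_nonpos)
  finally have "0 \<le> (\<Sum>j\<in>UNIV. max 0 (g x $ j) * (grad (\<lambda>y. g y $ j) x \<bullet> (y - x)))"
    using arg_cong[OF stat, of "\<lambda>v. v \<bullet> (y - x)"] by (simp add: inner_add_left inner_sum_left)
  also have "\<dots> \<le> (\<Sum>j\<in>UNIV. max 0 (g x $ j) * (g y $ j - g x $ j))"
    using convex_C1_grad_above_tangent[OF g_C1 g_convex] by (intro sum_mono mult_left_mono) auto
  finally have "(norm (vplus (g x)))\<^sup>2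
      \<le> (\<Sum>j\<in>UNIV. (max 0 (g x $ j))\<^sup>2 + 2 * max 0 (g x $ j) * (g y $ j - g x $ j))"
    unfolding norm_vplus_square sum.distrib by (simp add: sum_distrib_left[symmetric] mult.assoc)
  also have "\<dots> \<le> (norm (vplus (g y)))\<^sup>2"
    unfolding norm_vplus_square by (intro sum_mono pos_part_square_above_tangent)
  finally show ?thesis .
qed

lemma min_sq_infeasibility_imp_feasible:
  assumes min: "\<forall>y. (\<forall>j. h y $ j \<le> 0) \<longrightarrow> (norm (vplus (g x)))\<^sup>2 \<le> (norm (vplus (g y)))\<^sup>2"
    and feasible: "(\<forall>j. g y $ j \<le> 0) \<and> (\<forall>j. h y $ j \<le> 0)"
  shows "\<forall>j. g x $ j \<le> 0"
proof -
  have "vplus (g y) = 0" using feasible by (simp add: vplus_def vec_eq_iff)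
  then have "vplus (g x) = 0" using min feasible by fastforce
  then show ?thesis by (simp add: vplus_def vec_eq_iff) (metis max.cobounded2)
qed

section \<open>Sequences\<close>

lemma strict_mono_subseq_Suc:
  assumes "strict_mono \<phi>" "(x \<circ> \<phi>) \<longlonglongrightarrow> l"
  obtains \<psi> where "strict_mono \<psi>" "(\<lambda>i. x (Suc (\<psi> i))) \<longlonglongrightarrow> l"
proof
  define \<psi> where "\<psi> i = \<phi> (Suc i) - 1" for i
  have Suc_\<psi>: "Suc (\<psi> i) = \<phi> (Suc i)" for i
    using seq_suble[OF assms(1), of "Suc i"] by (simp add: \<psi>_def)
  show "strict_mono \<psi>"
    using assms(1) Suc_\<psi> by (simp add: strict_mono_def) (metis Suc_less_eq)
  show "(\<lambda>i. x (Suc (\<psi> i))) \<longlonglongrightarrow> l"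
    unfolding Suc_\<psi> using LIMSEQ_Suc[OF assms(2)] by (simp add: o_def)
qed

lemma approx_complementarity_limit:
  fixes s m :: "nat \<Rightarrow> real"
  assumes s: "s \<longlonglongrightarrow> s0" and min_lim: "(\<lambda>k. min (s k) (m k)) \<longlonglongrightarrow> 0"
  shows approx_complementarity_limit_nonneg: "s0 \<ge> 0"
    and approx_complementarity_limit_neg_part: "(\<lambda>k. min 0 (m k)) \<longlonglongrightarrow> 0"
    and approx_complementarity_limit_inactive: "s0 > 0 \<Longrightarrow> m \<longlonglongrightarrow> 0"
proof -
  show "s0 \<ge> 0" by (rule LIMSEQ_le[OF min_lim s]) simp
  have lower: "(\<lambda>k. min 0 (min (s k) (m k))) \<longlonglongrightarrow> 0"
    using tendsto_min[OF tendsto_const min_lim, of 0] by simp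
  show "(\<lambda>k. min 0 (m k)) \<longlonglongrightarrow> 0"
    by (rule real_tendsto_sandwich[OF _ _ lower tendsto_const]) (auto intro: always_eventually)
  assume "s0 > 0"
  then have "\<forall>\<^sub>F k in sequentially. s k > s0 / 2 \<and> min (s k) (m k) < s0 / 2"
    using order_tendstoD(1)[OF s, of "s0 / 2"] order_tendstoD(2)[OF min_lim, of "s0 / 2"]
    by (intro eventually_conj) simp_all
  then have "\<forall>\<^sub>F k in sequentially. min (s k) (m k) = m k"
    by eventually_elim linarith
  then have "((\<lambda>k. min (s k) (m k)) \<longlonglongrightarrow> 0) \<longleftrightarrow> m \<longlonglongrightarrow> 0"
    by (rule tendsto_cong)
  with min_lim show "m \<longlonglongrightarrow> 0" by simp
qed

lemma eventually_contracting_imp_tendsto_zero: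
  fixes Q :: "nat \<Rightarrow> real"
  assumes Q: "\<And>k. Q k \<ge> 0" and \<tau>: "0 \<le> \<tau>" "\<tau> < 1"
    and contr: "\<And>k. k \<ge> K \<Longrightarrow> Q (Suc k) \<le> \<tau> * Q k"
  shows "Q \<longlonglongrightarrow> 0"
proof -
  have geometric: "Q (n + K) \<le> \<tau> ^ n * Q K" for n
  proof (induction n)
    case (Suc n)
    have "Q (Suc n + K) \<le> \<tau> * Q (n + K)" using contr[of "n + K"] by simp
    also have "\<dots> \<le> \<tau> * (\<tau> ^ n * Q K)" using Suc \<tau> by (simp add: mult_left_mono)
    finally show ?case by (simp add: mult.assoc)
  qed simp
  have "(\<lambda>n. \<tau> ^ n * Q K) \<longlonglongrightarrow> 0"
    using \<tau> by (intro tendsto_mult_left_zero LIMSEQ_power_zero) simp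
  then have "(\<lambda>n. Q (n + K)) \<longlonglongrightarrow> 0"
    by (rule Lim_null_comparison[rotated]) (use geometric Q in simp)
  then show ?thesis by (rule LIMSEQ_offset)
qed

locale penalty_sequence =
  fixes \<rho> :: "nat \<Rightarrow> real" and \<gamma> :: real
  assumes \<rho>_0: "\<rho> 0 > 0" and \<gamma>: "\<gamma> > 1"
    and \<rho>_Suc: "\<And>k. \<rho> (Suc k) = \<rho> k \<or> \<rho> (Suc k) = \<gamma> * \<rho> k"
begin

lemma positive: "\<rho> k > 0"
proof (induction k)
  case (Suc k)
  then show ?case using \<rho>_Suc[of k] \<gamma> by auto
qed (rule \<rho>_0)

lemma increasing: "incseq \<rho>"
proof (rule incseq_SucI)
  fix k
  show "\<rho> k \<le> \<rho> (Suc k)" using \<rho>_Suc[of k] positive[of k] \<gamma> by auto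
qed

lemma unbounded_if_not_eventually_const:
  assumes not_const: "\<And>K. \<exists>k\<ge>K. \<rho> (Suc k) \<noteq> \<rho> k"
  shows "filterlim \<rho> at_top sequentially"
proof -
  have grow: "\<exists>K. \<rho> K \<ge> \<gamma> ^ n * \<rho> 0" for n
  proof (induction n)
    case (Suc n)
    then obtain K where K: "\<rho> K \<ge> \<gamma> ^ n * \<rho> 0" by blast
    obtain k where "k \<ge> K" and step: "\<rho> (Suc k) = \<gamma> * \<rho> k"
      using not_const \<rho>_Suc by metis
    then have "\<gamma> ^ n * \<rho> 0 \<le> \<rho> k" using K increasing by (meson incseqD order_trans)
    then have "\<gamma> ^ Suc n * \<rho> 0 \<le> \<rho> (Suc k)" using \<gamma> step by (simp add: mult.assoc)
    then show ?case by blast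
  qed auto
  show ?thesis
    unfolding filterlim_at_top eventually_sequentially
  proof
    fix Z :: real
    obtain n where "Z / \<rho> 0 < \<gamma> ^ n" using real_arch_pow[OF \<gamma>] by blast
    then have "Z \<le> \<gamma> ^ n * \<rho> 0" using \<rho>_0 by (simp add: pos_divide_less_eq less_imp_le)
    moreover obtain K where "\<rho> K \<ge> \<gamma> ^ n * \<rho> 0" using grow by blast
    ultimately show "\<exists>N. \<forall>k\<ge>N. Z \<le> \<rho> k" using increasing by (meson incseqD order_trans)
  qed
qed

end

section \<open>The augmented Lagrangian method\<close>

definition pseudo_grad :: "('N \<Rightarrow> real^'n \<Rightarrow> real) \<Rightarrow> ('n \<Rightarrow> 'N) \<Rightarrow> real^'n \<Rightarrow> real^'n" where
  "pseudo_grad \<theta> blk z = (\<chi> l. grad (\<theta> (blk l)) z $ l)"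

lemma isCont_pseudo_grad:
  assumes "\<And>\<nu>. C1 (\<theta> \<nu>)"
  shows "isCont (pseudo_grad \<theta> blk) z"
  unfolding isCont_def pseudo_grad_def
  by (intro vec_tendstoI) (simp add: tendsto_vec_nth C1_isCont_grad[OF assms, unfolded isCont_def])

lemma bgrad_nth: "bgrad blk (blk l) f z $ l = grad f z $ l"
  by (simp add: bgrad_def)

locale ve_alm =
  fixes theta :: "'N::finite \<Rightarrow> real^'n \<Rightarrow> real"
    and blk :: "'n \<Rightarrow> 'N"
    and g :: "real^'n \<Rightarrow> real^'m"
    and h :: "real^'n \<Rightarrow> real^'p"
    and umax tau gamma :: real
    and x :: "nat \<Rightarrow> real^'n"
    and lam u :: "nat \<Rightarrow> real^'m"
    and mu :: "nat \<Rightarrow> real^'p"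
    and rho eps eps' :: "nat \<Rightarrow> real"
  assumes theta_C1: "\<And>nu. C1 (theta nu)"
    and g_C1: "\<And>j. C1 (\<lambda>y. g y $ j)"
    and h_C1: "\<And>j. C1 (\<lambda>y. h y $ j)"
    and umax: "umax \<ge> 0"
    and tau: "0 < tau" "tau < 1"
    and gamma: "gamma > 1"
    and rho0: "rho 0 > 0"
    and u0: "\<And>j. 0 \<le> u 0 $ j \<and> u 0 $ j \<le> umax"
    and inexact1: "\<And>k nu. norm (bgrad blk nu (\<lambda>y. La (theta nu) g y (u k) (rho k)) (x (Suc k))
                     + (\<Sum>j\<in>UNIV. (mu (Suc k) $ j) *\<^sub>R bgrad blk nu (\<lambda>y. h y $ j) (x (Suc k))))
                   \<le> eps k"
    and inexact2: "\<And>k. norm (vmin (- h (x (Suc k))) (mu (Suc k))) \<le> eps' k"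
    and eps_bounded: "bounded (range eps)"
    and eps'_lim: "eps' \<longlonglongrightarrow> 0"
    and lam_upd: "\<And>k. lam (Suc k) = vplus (u k + rho k *\<^sub>R g (x (Suc k)))"
    and rho_upd: "\<And>k. rho (Suc k) =
         (if norm (vmin (- g (x (Suc k))) (lam (Suc k))) \<le> tau * norm (vmin (- g (x k)) (lam k))
          then rho k else gamma * rho k)"
    and u_upd: "\<And>k. u (Suc k) = (\<chi> j. min (lam (Suc k) $ j) umax)"
begin

sublocale penalty_sequence rho gamma
  using rho0 gamma rho_upd by unfold_locales simp_all

lemma lam_Suc_nth: "lam (Suc k) $ j = max 0 (u k $ j + rho k * g (x (Suc k)) $ j)"
  by (simp add: lam_upd vplus_def)

lemma u_bounds: "0 \<le> u k $ j \<and> u k $ j \<le> umax"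
  by (cases k) (use u0 umax in \<open>auto simp: u_upd lam_Suc_nth\<close>)

lemma h_complementarity_bound: "\<bar>min (- h (x (Suc k)) $ j) (mu (Suc k) $ j)\<bar> \<le> eps' k"
  using component_le_norm_cart[of "vmin (- h (x (Suc k))) (mu (Suc k))" j] inexact2[of k]
  by (simp add: vmin_def)

definition residual :: "nat \<Rightarrow> real^'n" where
  "residual k = pseudo_grad theta blk (x (Suc k))
      + (\<Sum>j\<in>UNIV. lam (Suc k) $ j *\<^sub>R grad (\<lambda>y. g y $ j) (x (Suc k)))
      + (\<Sum>j\<in>UNIV. mu (Suc k) $ j *\<^sub>R grad (\<lambda>y. h y $ j) (x (Suc k)))"

lemma residual_bound: "\<bar>residual k $ l\<bar> \<le> eps k"
proof -
  let ?E = "bgrad blk (blk l) (\<lambda>y. La (theta (blk l)) g y (u k) (rho k)) (x (Suc k))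
      + (\<Sum>j\<in>UNIV. (mu (Suc k) $ j) *\<^sub>R bgrad blk (blk l) (\<lambda>y. h y $ j) (x (Suc k)))"
  have "\<bar>?E $ l\<bar> \<le> eps k"
    using component_le_norm_cart[of ?E l] inexact1[where k=k and nu="blk l"] by linarith
  moreover have "?E $ l = residual k $ l"
    by (simp add: bgrad_nth grad_La[OF theta_C1 g_C1 positive] lam_Suc_nth pseudo_grad_def residual_def)
  ultimately show ?thesis by simp
qed

context
  fixes \<psi> :: "nat \<Rightarrow> nat" and xbar :: "real^'n"
  assumes \<psi>: "strict_mono \<psi>" and x_lim: "(\<lambda>i. x (Suc (\<psi> i))) \<longlonglongrightarrow> xbar"
begin

lemma h_complementarity_limit:
  "(\<lambda>i. min (- h (x (Suc (\<psi> i))) $ j) (mu (Suc (\<psi> i)) $ j)) \<longlonglongrightarrow> 0"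
proof (rule Lim_null_comparison)
  show "\<forall>\<^sub>F i in sequentially. norm (min (- h (x (Suc (\<psi> i))) $ j) (mu (Suc (\<psi> i)) $ j)) \<le> eps' (\<psi> i)"
    using h_complementarity_bound by simp
  show "(\<lambda>i. eps' (\<psi> i)) \<longlonglongrightarrow> 0"
    using LIMSEQ_subseq_LIMSEQ[OF eps'_lim \<psi>] by (simp add: o_def)
qed

lemma minus_h_lim: "(\<lambda>i. - h (x (Suc (\<psi> i))) $ j) \<longlonglongrightarrow> - h xbar $ j"
  by (intro tendsto_minus isCont_tendsto_compose[OF C1_isCont[OF h_C1] x_lim])

lemma limit_h_feasible: "h xbar $ j \<le> 0"
  using approx_complementarity_limit_nonneg[OF minus_h_lim h_complementarity_limit] by simp

lemma bounded_penalty_imp_g_feasible: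
  assumes "\<exists>K. \<forall>k\<ge>K. rho (Suc k) = rho k"
  shows "g xbar $ j \<le> 0"
proof -
  obtain K where K: "\<And>k. k \<ge> K \<Longrightarrow> rho (Suc k) = rho k" using assms by blast
  define Q where "Q k = norm (vmin (- g (x k)) (lam k))" for k
  have "Q (Suc k) \<le> tau * Q k" if "k \<ge> K" for k
    using K[OF that] rho_upd[of k] positive[of k] gamma by (auto simp: Q_def split: if_splits)
  then have "Q \<longlonglongrightarrow> 0"
    using tau by (intro eventually_contracting_imp_tendsto_zero[of Q tau K]) (auto simp: Q_def)
  from LIMSEQ_subseq_LIMSEQ[OF LIMSEQ_Suc[OF this] \<psi>]
  have Q_lim: "(\<lambda>i. Q (Suc (\<psi> i))) \<longlonglongrightarrow> 0" by (simp add: o_def)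
  have g_le_Q: "g (x (Suc k)) $ j \<le> Q (Suc k)" for k
  proof (cases "g (x (Suc k)) $ j > 0")
    case True
    then have "vmin (- g (x (Suc k))) (lam (Suc k)) $ j = - g (x (Suc k)) $ j"
      by (simp add: vmin_def lam_Suc_nth)
    then show ?thesis
      using component_le_norm_cart[of "vmin (- g (x (Suc k))) (lam (Suc k))" j]
      by (simp add: Q_def)
  next
    case False
    then show ?thesis unfolding Q_def by (meson norm_ge_zero not_less order_trans)
  qed
  show ?thesis
    by (rule LIMSEQ_le[OF isCont_tendsto_compose[OF C1_isCont[OF g_C1] x_lim] Q_lim])
      (use g_le_Q in auto)
qed

context
  assumes rho_unbounded: "filterlim rho at_top sequentially"
begin

lemma inverse_rho_lim: "(\<lambda>i. inverse (rho (\<psi> i))) \<longlonglongrightarrow> 0"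
  using tendsto_inverse_0_at_top[OF filterlim_compose[OF rho_unbounded filterlim_subseq[OF \<psi>]]] .

lemma scaled_residual_lim: "(\<lambda>i. inverse (rho (\<psi> i)) *\<^sub>R residual (\<psi> i)) \<longlonglongrightarrow> 0"
proof (rule vec_tendstoI)
  fix l
  obtain B where B: "\<And>k. \<bar>eps k\<bar> \<le> B" using eps_bounded unfolding bounded_iff by auto
  have bound: "norm ((inverse (rho (\<psi> i)) *\<^sub>R residual (\<psi> i)) $ l) \<le> inverse (rho (\<psi> i)) * B" for i
    using residual_bound[of "\<psi> i" l] B[of "\<psi> i"] positive[of "\<psi> i"]
    by (simp add: abs_mult mult_left_mono)
  have "(\<lambda>i. inverse (rho (\<psi> i)) * B) \<longlonglongrightarrow> 0"
    by (rule tendsto_mult_left_zero[OF inverse_rho_lim])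
  from Lim_null_comparison[OF always_eventually[OF allI[OF bound]] this]
  show "(\<lambda>i. (inverse (rho (\<psi> i)) *\<^sub>R residual (\<psi> i)) $ l) \<longlonglongrightarrow> 0 $ l" by simp
qed

lemma scaled_lam_lim: "(\<lambda>i. lam (Suc (\<psi> i)) $ j / rho (\<psi> i)) \<longlonglongrightarrow> max 0 (g xbar $ j)"
proof -
  have bound: "norm (u (\<psi> i) $ j / rho (\<psi> i)) \<le> umax * inverse (rho (\<psi> i))" for i
    using u_bounds[of "\<psi> i" j] positive[of "\<psi> i"] by (simp add: divide_inverse mult_right_mono)
  have "(\<lambda>i. u (\<psi> i) $ j / rho (\<psi> i)) \<longlonglongrightarrow> 0"
    using Lim_null_comparison[OF always_eventually[OF allI[OF bound]]
        tendsto_mult_right_zero[OF inverse_rho_lim]] .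
  then have "(\<lambda>i. max 0 (g (x (Suc (\<psi> i))) $ j + u (\<psi> i) $ j / rho (\<psi> i)))
      \<longlonglongrightarrow> max 0 (g xbar $ j + 0)"
    by (intro tendsto_max tendsto_const tendsto_add isCont_tendsto_compose[OF C1_isCont[OF g_C1] x_lim])
  moreover have "lam (Suc k) $ j / rho k = max 0 (g (x (Suc k)) $ j + u k $ j / rho k)" for k
    using positive[of k] by (simp add: lam_Suc_nth max_divide_distrib_right add_divide_distrib)
  ultimately show ?thesis by simp
qed

lemma scaled_mu_neg_part_lim: "(\<lambda>i. min 0 (mu (Suc (\<psi> i)) $ j / rho (\<psi> i))) \<longlonglongrightarrow> 0"
proof -
  have "(\<lambda>i. min 0 (mu (Suc (\<psi> i)) $ j) * inverse (rho (\<psi> i))) \<longlonglongrightarrow> 0 * 0"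
    by (intro tendsto_mult inverse_rho_lim
        approx_complementarity_limit_neg_part[OF minus_h_lim h_complementarity_limit])
  moreover have "min 0 (mu (Suc k) $ j / rho k) = min 0 (mu (Suc k) $ j) * inverse (rho k)" for k
    using positive[of k] by (simp add: min_mult_distrib_right divide_inverse)
  ultimately show ?thesis by simp
qed

lemma scaled_mu_inactive_lim:
  assumes "h xbar $ j < 0"
  shows "(\<lambda>i. mu (Suc (\<psi> i)) $ j / rho (\<psi> i)) \<longlonglongrightarrow> 0"
  using tendsto_mult[OF approx_complementarity_limit_inactive[OF minus_h_lim h_complementarity_limit]
      inverse_rho_lim] assms
  by (simp add: divide_inverse)

lemma unbounded_penalty_imp_KKT:
  assumes cpld: "CPLD h xbar"
  shows "KKT_sq_infeasibility g h xbar"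
proof -
  let ?Y = "\<lambda>i. x (Suc (\<psi> i))" and ?R = "\<lambda>i. rho (\<psi> i)"
  let ?a = "\<lambda>j. grad (\<lambda>y. h y $ j)" and ?b = "\<lambda>j. grad (\<lambda>y. g y $ j)"
  let ?w = "\<Sum>j\<in>UNIV. max 0 (g xbar $ j) *\<^sub>R ?b j xbar"
  have T_lim: "(\<lambda>i. inverse (?R i) *\<^sub>R pseudo_grad theta blk (?Y i))
      \<longlonglongrightarrow> 0 *\<^sub>R pseudo_grad theta blk xbar"
    by (intro tendsto_scaleR inverse_rho_lim isCont_tendsto_compose[OF isCont_pseudo_grad[OF theta_C1] x_lim])
  have lam_lim: "(\<lambda>i. \<Sum>j\<in>UNIV. (lam (Suc (\<psi> i)) $ j / ?R i) *\<^sub>R ?b j (?Y i)) \<longlonglongrightarrow> ?w"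
    by (intro tendsto_sum tendsto_scaleR scaled_lam_lim isCont_tendsto_compose[OF C1_isCont_grad[OF g_C1] x_lim])
  have scale_sum: "inverse r *\<^sub>R (\<Sum>j\<in>UNIV. c j *\<^sub>R v j) = (\<Sum>j\<in>UNIV. (c j / r) *\<^sub>R v j)"
    for r and c :: "'q \<Rightarrow> real" and v :: "'q \<Rightarrow> real^'n"
    by (simp add: scaleR_sum_right divide_inverse mult.commute)
  \<comment> \<open>divide the approximate stationarity condition by the penalty parameter\<close>
  have "(\<lambda>i. \<Sum>j\<in>UNIV. (mu (Suc (\<psi> i)) $ j / ?R i) *\<^sub>R ?a j (?Y i)) \<longlonglongrightarrow> 0 - 0 *\<^sub>R pseudo_grad theta blk xbar - ?w"
    using tendsto_diff[OF tendsto_diff[OF scaled_residual_lim T_lim] lam_lim]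
    unfolding residual_def scaleR_add_right scale_sum by (simp add: algebra_simps)
  then have mu_lim: "(\<lambda>i. \<Sum>j\<in>UNIV. (mu (Suc (\<psi> i)) $ j / ?R i) *\<^sub>R ?a j (?Y i)) \<longlonglongrightarrow> - ?w"
    by simp
  have "\<exists>\<nu>. (\<forall>j\<in>{j. h xbar $ j = 0}. \<nu> j \<ge> 0)
      \<and> (\<Sum>j\<in>{j. h xbar $ j = 0}. \<nu> j *\<^sub>R ?a j xbar) = - ?w"
  proof (rule CPLD_family_cone_limit_approx[where c="\<lambda>i j. mu (Suc (\<psi> i)) $ j / ?R i",
        OF cpld[unfolded CPLD_iff_CPLD_family]
        C1_isCont_grad[OF h_C1] x_lim])
    show "(\<lambda>i. min 0 (mu (Suc (\<psi> i)) $ j / ?R i)) \<longlonglongrightarrow> 0" for j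
      by (rule scaled_mu_neg_part_lim)
    show "(\<lambda>i. mu (Suc (\<psi> i)) $ j / ?R i) \<longlonglongrightarrow> 0" if "j \<notin> {j. h xbar $ j = 0}" for j
      using that limit_h_feasible[of j] by (intro scaled_mu_inactive_lim) simp
  qed (fact mu_lim)
  then show ?thesis
    unfolding KKT_sq_infeasibility_def using limit_h_feasible by auto
qed

end

end

end

theorem theorem5p3:
  fixes theta :: "'N::finite \<Rightarrow> real^'n \<Rightarrow> real"
    and blk :: "'n \<Rightarrow> 'N"
    and g :: "real^'n \<Rightarrow> real^'m"
    and h :: "real^'n \<Rightarrow> real^'p"
    and umax tau gamma :: real
    and x :: "nat \<Rightarrow> real^'n"
    and lam u :: "nat \<Rightarrow> real^'m"
    and mu :: "nat \<Rightarrow> real^'p"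
    and rho eps eps' :: "nat \<Rightarrow> real"
    and xbar :: "real^'n"
  assumes theta_C1: "\<And>nu. C1 (theta nu)"
    and g_C1: "\<And>j. C1 (\<lambda>y. g y $ j)"
    and h_C1: "\<And>j. C1 (\<lambda>y. h y $ j)"
    and g_convex: "\<And>j. convex_on UNIV (\<lambda>y. g y $ j)"
    and h_convex: "\<And>j. convex_on UNIV (\<lambda>y. h y $ j)"
    and umax: "umax \<ge> 0"
    and tau: "0 < tau" "tau < 1"
    and gamma: "gamma > 1"
    and rho0: "rho 0 > 0"
    and u0: "\<And>j. 0 \<le> u 0 $ j \<and> u 0 $ j \<le> umax"
    and inexact1: "\<And>k nu. norm (bgrad blk nu (\<lambda>y. La (theta nu) g y (u k) (rho k)) (x (Suc k))
                     + (\<Sum>j\<in>UNIV. (mu (Suc k) $ j) *\<^sub>R bgrad blk nu (\<lambda>y. h y $ j) (x (Suc k))))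
                   \<le> eps k"
    and inexact2: "\<And>k. norm (vmin (- h (x (Suc k))) (mu (Suc k))) \<le> eps' k"
    and eps_nonneg: "\<And>k. eps k \<ge> 0"
    and eps_bounded: "bounded (range eps)"
    and eps'_nonneg: "\<And>k. eps' k \<ge> 0"
    and eps'_lim: "eps' \<longlonglongrightarrow> 0"
    and lam_upd: "\<And>k. lam (Suc k) = vplus (u k + rho k *\<^sub>R g (x (Suc k)))"
    and rho_upd: "\<And>k. rho (Suc k) =
         (if norm (vmin (- g (x (Suc k))) (lam (Suc k))) \<le> tau * norm (vmin (- g (x k)) (lam k))
          then rho k else gamma * rho k)"
    and u_upd: "\<And>k. u (Suc k) = (\<chi> j. min (lam (Suc k) $ j) umax)"
    and limpt: "\<exists>\<phi>. strict_mono \<phi> \<and> (x \<circ> \<phi>) \<longlonglongrightarrow> xbar"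
    and cpld: "CPLD h xbar"
  shows "(\<forall>j. h xbar $ j \<le> 0)
      \<and> (\<forall>y. (\<forall>j. h y $ j \<le> 0) \<longrightarrow> (norm (vplus (g xbar)))\<^sup>2 \<le> (norm (vplus (g y)))\<^sup>2)
      \<and> ((\<exists>y. (\<forall>j. g y $ j \<le> 0) \<and> (\<forall>j. h y $ j \<le> 0)) \<longrightarrow>
           (\<forall>j. g xbar $ j \<le> 0) \<and> (\<forall>j. h xbar $ j \<le> 0))"
proof -
  interpret ve_alm theta blk g h umax tau gamma x lam u mu rho eps eps'
    by unfold_locales (fact assms)+
  obtain \<phi> where "strict_mono \<phi>" "(x \<circ> \<phi>) \<longlonglongrightarrow> xbar" using limpt by blast
  then obtain \<psi> where \<psi>: "strict_mono \<psi>" and x_lim: "(\<lambda>i. x (Suc (\<psi> i))) \<longlonglongrightarrow> xbar"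
    by (rule strict_mono_subseq_Suc)
  have h_feasible: "\<forall>j. h xbar $ j \<le> 0"
    using limit_h_feasible[OF \<psi> x_lim] by blast
  have min: "\<forall>y. (\<forall>j. h y $ j \<le> 0) \<longrightarrow> (norm (vplus (g xbar)))\<^sup>2 \<le> (norm (vplus (g y)))\<^sup>2"
  proof (cases "\<exists>K. \<forall>k\<ge>K. rho (Suc k) = rho k")
    case True
    then have "vplus (g xbar) = 0"
      using bounded_penalty_imp_g_feasible[OF \<psi> x_lim] by (simp add: vplus_def vec_eq_iff)
    then show ?thesis by simp
  next
    case False
    then have "filterlim rho at_top sequentially"
      by (intro unbounded_if_not_eventually_const) auto
    from unbounded_penalty_imp_KKT[OF \<psi> x_lim this cpld] show ?thesis
      using KKT_sq_infeasibility_imp_min[OF g_C1 h_C1 g_convex h_convex] by blast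
  qed
  show ?thesis
    using h_feasible min min_sq_infeasibility_imp_feasible[OF min] by blast
qed

end
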